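(* Let $A$ be an $n\times n$ P-matrix and let $I$ be the $n\times n$ identity matrix. Then the $2n\times 2n$ matrix \[M=\begin{pmatrix} A & A+I\\ A-I & A\end{pmatrix}\] is also a P-matrix.
   Context: A P-matrix is a square real matrix all of whose principal minors are positive. *)

theory Defs
  imports "Jordan_Normal_Form.DL_Submatrix" "Jordan_Normal_Form.Determinant"
begin

definition P_matrix :: "real mat \<Rightarrow> bool" where
  "P_matrix A \<longleftrightarrow> A \<in> carrier_mat (dim_row A) (dim_row A) \<and>
     (\<forall>S. S \<subseteq> {0..<dim_row A} \<and> S \<noteq> {} \<longrightarrow> det (submatrix A S S) > 0)"

end

theory Submission
  imports Defs
begin

text \<open>Call \<open>M = [[A, A+I], [A-I, A]]\<close> the doubled matrix of \<open>A\<close> and let \<open>S \<subseteq> {0..<2n}\<close>.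
  Call \<open>a < n\<close> paired if both \<open>a\<close> and \<open>a + n\<close> lie in \<open>S\<close>, and unpaired if exactly one of
  them does. Listing \<open>S\<close> as the paired indices, their shifts by \<open>n\<close>, and then the unpaired
  ones, the principal submatrix \<open>M[S,S]\<close> takes the block form
  \<open>[[X, X+I, Y], [X-I, X, Y], [Z, Z, W]]\<close>, where \<open>W\<close> is the principal submatrix of \<open>A\<close> on
  the unpaired indices. Block elimination with \<open>F = [Z, -Z]\<close> (note
  \<open>F [[X, X+I], [X-I, X]] = [Z, Z]\<close> and \<open>F [Y; Y] = 0\<close>) shows that its determinant is \<open>det W\<close>
  times the determinant of the doubled matrix of \<open>X\<close>, which is \<open>det (X * X - (X+I) * (X-I)) = 1\<close>.
  So every principal minor of \<open>M\<close> is either a principal minor of \<open>A\<close> or, if there are no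
  unpaired indices, equal to 1.\<close>

lemma bij_betw_pick:
  assumes "finite S"
  shows "bij_betw (pick S) {0..<card S} S"
proof (rule bij_betwI')
  fix x y assume "x \<in> {0..<card S}" "y \<in> {0..<card S}"
  then show "pick S x = pick S y \<longleftrightarrow> x = y" using card_pick_le by (metis atLeastLessThan_iff)
next
  fix x assume "x \<in> {0..<card S}"
  then show "pick S x \<in> S" using pick_in_set_le by auto
next
  fix y assume y: "y \<in> S"
  then have "card {a \<in> S. a < y} < card S"
    using assms by (intro psubset_card_mono) auto
  then show "\<exists>x\<in>{0..<card S}. y = pick S x" using pick_card_in_set[OF y] by force
qed

lemma bij_betw_piecewise_index:
  fixes a b :: nat
  assumes f: "bij_betw f {0..<a} U" and g: "bij_betw g {0..<b} V" and "U \<inter> V = {}"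
  shows "bij_betw (\<lambda>i. if i < a then f i else g (i - a)) {0..<a + b} (U \<union> V)"
proof -
  have "bij_betw (\<lambda>i. i - a) {a..<a + b} {0..<b}"
    by (rule bij_betw_byWitness[where f' = "\<lambda>i. i + a"]) auto
  then have "bij_betw (\<lambda>i. g (i - a)) {a..<a + b} V"
    using bij_betw_trans[OF _ g] by (simp add: comp_def)
  then have "bij_betw (\<lambda>i. if i < a then f i else g (i - a)) {a..<a + b} V"
    by (rule bij_betw_cong[THEN iffD1, rotated]) auto
  moreover have "bij_betw (\<lambda>i. if i < a then f i else g (i - a)) {0..<a} U"
    using f by (rule bij_betw_cong[THEN iffD1, rotated]) auto
  ultimately have "bij_betw (\<lambda>i. if i < a then f i else g (i - a)) ({0..<a} \<union> {a..<a + b}) (U \<union> V)"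
    using \<open>U \<inter> V = {}\<close> by (intro bij_betw_combine) auto
  moreover have "{0..<a} \<union> {a..<a + b} = {0..<a + b}" by auto
  ultimately show ?thesis by simp
qed

lemma det_permute_rows_and_cols:
  fixes C :: "'a :: comm_ring_1 mat"
  assumes C: "C \<in> carrier_mat k k" and p: "p permutes {0..<k}"
  shows "det (mat k k (\<lambda>(i, j). C $$ (p i, p j))) = det C"
proof -
  define D where "D = mat k k (\<lambda>(i, j). C $$ (i, p j))"
  have D: "D \<in> carrier_mat k k" unfolding D_def by auto
  have p_lt: "i < k \<Longrightarrow> p i < k" for i using p permutes_in_image by fastforce
  have "det D = det (transpose_mat D)" using det_transpose[OF D] by simp
  also have "transpose_mat D = mat k k (\<lambda>(i, j). transpose_mat C $$ (p i, j))"
    using C by (intro eq_matI) (auto simp: D_def p_lt)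
  also have "det \<dots> = signof p * det C"
    using det_permute_rows[OF transpose_carrier_mat[THEN iffD2, OF C] p] det_transpose[OF C] by simp
  finally have "det D = signof p * det C" .
  moreover have "mat k k (\<lambda>(i, j). C $$ (p i, p j)) = mat k k (\<lambda>(i, j). D $$ (p i, j))"
    by (intro eq_matI) (auto simp: D_def p_lt)
  ultimately have "det (mat k k (\<lambda>(i, j). C $$ (p i, p j))) = (signof p * signof p) * det C"
    using det_permute_rows[OF D p] by simp
  also have "signof p * signof p = (1 :: 'a)"
    by (metis sign_idempotent of_int_1 of_int_mult)
  finally show ?thesis by simp
qed

lemma det_submatrix_reindex:
  fixes B :: "'a :: comm_ring_1 mat"
  assumes B: "B \<in> carrier_mat N N" and S: "S \<subseteq> {0..<N}" and g: "bij_betw g {0..<k} S"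
  shows "det (mat k k (\<lambda>(i, j). B $$ (g i, g j))) = det (submatrix B S S)"
proof -
  have k: "card S = k" using bij_betw_same_card[OF g] by simp
  then have h: "bij_betw (pick S) {0..<k} S"
    using bij_betw_pick S finite_subset by blast
  define p where "p i = (if i < k then the_inv_into {0..<k} (pick S) (g i) else i)" for i
  have "bij_betw (the_inv_into {0..<k} (pick S) \<circ> g) {0..<k} {0..<k}"
    using g bij_betw_the_inv_into[OF h] by (rule bij_betw_trans)
  then have "bij_betw p {0..<k} {0..<k}"
    by (rule bij_betw_cong[THEN iffD1, rotated]) (auto simp: p_def)
  then have p: "p permutes {0..<k}" by (rule bij_imp_permutes) (auto simp: p_def)
  have pick_p: "i < k \<Longrightarrow> pick S (p i) = g i" for i
    unfolding p_def using f_the_inv_into_f_bij_betw[OF h] g bij_betwE by fastforce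
  have p_lt: "i < k \<Longrightarrow> p i < k" for i using p permutes_in_image by fastforce
  have rows: "{i. i < dim_row B \<and> i \<in> S} = S" and cols: "{i. i < dim_col B \<and> i \<in> S} = S"
    using S B by auto
  have sub: "submatrix B S S \<in> carrier_mat k k"
    unfolding submatrix_def rows cols k by auto
  have "mat k k (\<lambda>(i, j). B $$ (g i, g j)) = mat k k (\<lambda>(i, j). submatrix B S S $$ (p i, p j))"
    by (intro eq_matI) (auto simp: submatrix_def rows cols k p_lt pick_p)
  then show ?thesis using det_permute_rows_and_cols[OF sub p] by simp
qed

lemma mat_piecewise_index_four_block_mat:
  "mat (a1 + a2) (b1 + b2) (\<lambda>(i, j). h (if i < a1 then f1 i else f2 (i - a1))
      (if j < b1 then g1 j else g2 (j - b1))) =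
    four_block_mat (mat a1 b1 (\<lambda>(i, j). h (f1 i) (g1 j))) (mat a1 b2 (\<lambda>(i, j). h (f1 i) (g2 j)))
      (mat a2 b1 (\<lambda>(i, j). h (f2 i) (g1 j))) (mat a2 b2 (\<lambda>(i, j). h (f2 i) (g2 j)))"
  by (rule eq_matI) auto

lemma det_four_block_mat_eliminate:
  fixes A :: "'a :: idom mat"
  assumes A: "A \<in> carrier_mat n n" and B: "B \<in> carrier_mat n m"
    and C: "C \<in> carrier_mat m n" and D: "D \<in> carrier_mat m m"
    and F: "F \<in> carrier_mat m n" and FA: "F * A = C"
  shows "det (four_block_mat A B C D) = det A * det (D - F * B)"
proof -
  define E where "E = four_block_mat (1\<^sub>m n) (0\<^sub>m n m) (- F) (1\<^sub>m m)"
  have E: "E \<in> carrier_mat (n + m) (n + m)" using F unfolding E_def by auto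
  have "det E = 1"
    unfolding E_def using F det_four_block_mat_upper_right_zero[of "1\<^sub>m n" n "0\<^sub>m n m" m "- F" "1\<^sub>m m"]
    by simp
  have "E * four_block_mat A B C D =
      four_block_mat (1\<^sub>m n * A + 0\<^sub>m n m * C) (1\<^sub>m n * B + 0\<^sub>m n m * D)
        (- F * A + 1\<^sub>m m * C) (- F * B + 1\<^sub>m m * D)"
    unfolding E_def using A B C D F by (intro mult_four_block_mat) auto
  also have "\<dots> = four_block_mat A B (0\<^sub>m m n) (D - F * B)"
  proof -
    have "- F * A = - C"
      using uminus_mult_left_mat[of F A] A F FA by simp
    then have "- F * A + 1\<^sub>m m * C = 0\<^sub>m m n"
      using C by (intro eq_matI) auto
    moreover have "- F * B + 1\<^sub>m m * D = D - F * B"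
      using B D F by (intro eq_matI) auto
    ultimately show ?thesis using A B C D by simp
  qed
  finally have eliminated: "E * four_block_mat A B C D = four_block_mat A B (0\<^sub>m m n) (D - F * B)" .
  have "det (four_block_mat A B C D) = det (E * four_block_mat A B C D)"
    using det_mult[OF E four_block_carrier_mat[OF A D]] \<open>det E = 1\<close> by simp
  also have "\<dots> = det A * det (D - F * B)"
    unfolding eliminated using A B D F by (intro det_four_block_mat_lower_left_zero) auto
  finally show ?thesis .
qed

lemma det_doubled_mat:
  fixes X :: "'a :: idom mat"
  assumes X: "X \<in> carrier_mat t t"
  shows "det (four_block_mat X (X + 1\<^sub>m t) (X - 1\<^sub>m t) X) = 1"
proof -
  have "det (four_block_mat X (X + 1\<^sub>m t) (X - 1\<^sub>m t) X) = det (X * X - (X + 1\<^sub>m t) * (X - 1\<^sub>m t))"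
    using X minus_mult_distrib_mat[OF X one_carrier_mat X]
      mult_minus_distrib_mat[OF X X one_carrier_mat]
    by (intro det_four_block_mat) auto
  also have "X * X - (X + 1\<^sub>m t) * (X - 1\<^sub>m t) = 1\<^sub>m t"
  proof -
    have "X - 1\<^sub>m t \<in> carrier_mat t t" using X by (simp add: minus_carrier_mat)
    then have "(X + 1\<^sub>m t) * (X - 1\<^sub>m t) = X * X - X + (X - 1\<^sub>m t)"
      using X add_mult_distrib_mat[OF X one_carrier_mat] mult_minus_distrib_mat[OF X X one_carrier_mat]
      by simp
    then show ?thesis using X by (intro eq_matI) auto
  qed
  finally show ?thesis by simp
qed

lemma det_doubled_block_mat:
  fixes X Y Z W :: "'a :: idom mat"
  assumes X: "X \<in> carrier_mat t t" and Y: "Y \<in> carrier_mat t m"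
    and Z: "Z \<in> carrier_mat m t" and W: "W \<in> carrier_mat m m"
  shows "det (four_block_mat (four_block_mat X (X + 1\<^sub>m t) (X - 1\<^sub>m t) X)
    (four_block_mat Y (0\<^sub>m t 0) Y (0\<^sub>m t 0)) (four_block_mat Z Z (0\<^sub>m 0 t) (0\<^sub>m 0 t)) W) = det W"
proof -
  define C1 where "C1 = four_block_mat X (X + 1\<^sub>m t) (X - 1\<^sub>m t) X"
  define C2 where "C2 = four_block_mat Y (0\<^sub>m t 0) Y (0\<^sub>m t 0)"
  define C3 where "C3 = four_block_mat Z Z (0\<^sub>m 0 t) (0\<^sub>m 0 t)"
  define F where "F = four_block_mat Z (- Z) (0\<^sub>m 0 t) (0\<^sub>m 0 t)"
  have C1: "C1 \<in> carrier_mat (t + t) (t + t)" and C2: "C2 \<in> carrier_mat (t + t) m"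
    and C3: "C3 \<in> carrier_mat m (t + t)" and F: "F \<in> carrier_mat m (t + t)"
    unfolding C1_def C2_def C3_def F_def using X Y Z by auto
  have "F * C1 = four_block_mat (Z * X + - Z * (X - 1\<^sub>m t)) (Z * (X + 1\<^sub>m t) + - Z * X)
      (0\<^sub>m 0 t * X + 0\<^sub>m 0 t * (X - 1\<^sub>m t)) (0\<^sub>m 0 t * (X + 1\<^sub>m t) + 0\<^sub>m 0 t * X)"
    unfolding F_def C1_def using X Z by (intro mult_four_block_mat) auto
  also have "\<dots> = C3"
  proof -
    have "- Z * X = - (Z * X)" "- Z * (X - 1\<^sub>m t) = - (Z * X - Z)"
      "Z * (X + 1\<^sub>m t) = Z * X + Z"
      using uminus_mult_left_mat[of Z] mult_minus_distrib_mat[OF Z X one_carrier_mat]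
        mult_add_distrib_mat[OF Z X one_carrier_mat] X Z by auto
    then show ?thesis unfolding C3_def using X Z by (intro eq_matI) auto
  qed
  finally have FC1: "F * C1 = C3" .
  have "F * C2 = four_block_mat (Z * Y + - Z * Y) (Z * 0\<^sub>m t 0 + - Z * 0\<^sub>m t 0)
      (0\<^sub>m 0 t * Y + 0\<^sub>m 0 t * Y) (0\<^sub>m 0 t * 0\<^sub>m t 0 + 0\<^sub>m 0 t * 0\<^sub>m t 0)"
    unfolding F_def C2_def using Y Z by (intro mult_four_block_mat) auto
  also have "\<dots> = 0\<^sub>m m m"
    using uminus_mult_left_mat[of Z Y] Y Z by (intro eq_matI) auto
  finally have FC2: "F * C2 = 0\<^sub>m m m" .
  have "det (four_block_mat C1 C2 C3 W) = det C1 * det (W - F * C2)"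
    by (rule det_four_block_mat_eliminate[OF C1 C2 C3 W F FC1])
  also have "W - F * C2 = W"
    unfolding FC2 using W by (intro eq_matI) auto
  finally show ?thesis using det_doubled_mat[OF X] unfolding C1_def C2_def C3_def by simp
qed

lemma index_doubled_mat:
  fixes A :: "'a :: ring_1 mat"
  assumes "A \<in> carrier_mat n n" and "a < n" and "b < n"
  shows "four_block_mat A (A + 1\<^sub>m n) (A - 1\<^sub>m n) A $$ (a, b) = A $$ (a, b)"
    and "four_block_mat A (A + 1\<^sub>m n) (A - 1\<^sub>m n) A $$ (a, b + n) = A $$ (a, b) + (if a = b then 1 else 0)"
    and "four_block_mat A (A + 1\<^sub>m n) (A - 1\<^sub>m n) A $$ (a + n, b) = A $$ (a, b) - (if a = b then 1 else 0)"
    and "four_block_mat A (A + 1\<^sub>m n) (A - 1\<^sub>m n) A $$ (a + n, b + n) = A $$ (a, b)"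
  using assms by auto

lemma index_doubled_mat_copies:
  fixes A :: "'a :: ring_1 mat"
  assumes "A \<in> carrier_mat n n" and "a < n" and "b < n"
    and "x \<in> {a, a + n}" and "y \<in> {b, b + n}" and "a = b \<longrightarrow> x = y"
  shows "four_block_mat A (A + 1\<^sub>m n) (A - 1\<^sub>m n) A $$ (x, y) = A $$ (a, b)"
  using assms by (auto simp: index_doubled_mat)

lemma det_doubled_mat_enumeration:
  fixes A :: "'a :: idom mat"
  assumes A: "A \<in> carrier_mat n n"
    and \<tau>: "inj_on \<tau> {0..<t}" "\<tau> ` {0..<t} \<subseteq> {0..<n}"
    and \<psi>: "\<psi> ` {0..<m} \<subseteq> {0..<n} - \<tau> ` {0..<t}"
    and \<sigma>: "\<And>q. q < n \<Longrightarrow> \<sigma> q \<in> {q, q + n}"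
  defines "g \<equiv> \<lambda>i. if i < t + t then (if i < t then \<tau> i else \<tau> (i - t) + n) else \<sigma> (\<psi> (i - (t + t)))"
  shows "det (mat (t + t + m) (t + t + m)
      (\<lambda>(i, j). four_block_mat A (A + 1\<^sub>m n) (A - 1\<^sub>m n) A $$ (g i, g j))) =
    det (mat m m (\<lambda>(i, j). A $$ (\<psi> i, \<psi> j)))"
proof -
  let ?M = "four_block_mat A (A + 1\<^sub>m n) (A - 1\<^sub>m n) A"
  define X where "X = mat t t (\<lambda>(i, j). A $$ (\<tau> i, \<tau> j))"
  define Y where "Y = mat t m (\<lambda>(i, j). A $$ (\<tau> i, \<psi> j))"
  define Z where "Z = mat m t (\<lambda>(i, j). A $$ (\<psi> i, \<tau> j))"
  define W where "W = mat m m (\<lambda>(i, j). A $$ (\<psi> i, \<psi> j))"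
  have \<tau>_lt: "\<And>i. i < t \<Longrightarrow> \<tau> i < n" and \<psi>_lt: "\<And>j. j < m \<Longrightarrow> \<psi> j < n"
    and \<tau>_\<psi>: "\<And>i j. i < t \<Longrightarrow> j < m \<Longrightarrow> \<tau> i \<noteq> \<psi> j"
    using \<tau>(2) \<psi> by (fastforce simp: image_subset_iff)+
  have \<tau>_eq: "\<And>i j. i < t \<Longrightarrow> j < t \<Longrightarrow> \<tau> i = \<tau> j \<longleftrightarrow> i = j"
    using \<tau>(1) by (simp add: inj_on_eq_iff)
  note index = index_doubled_mat[OF A] and index_copies = index_doubled_mat_copies[OF A]
  have "mat (t + t + m) (t + t + m) (\<lambda>(i, j). ?M $$ (g i, g j)) =
    four_block_mat
      (mat (t + t) (t + t) (\<lambda>(i, j). ?M $$ (if i < t then \<tau> i else \<tau> (i - t) + n,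
         if j < t then \<tau> j else \<tau> (j - t) + n)))
      (mat (t + t) m (\<lambda>(i, j). ?M $$ (if i < t then \<tau> i else \<tau> (i - t) + n, \<sigma> (\<psi> j))))
      (mat m (t + t) (\<lambda>(i, j). ?M $$ (\<sigma> (\<psi> i), if j < t then \<tau> j else \<tau> (j - t) + n)))
      (mat m m (\<lambda>(i, j). ?M $$ (\<sigma> (\<psi> i), \<sigma> (\<psi> j))))"
    unfolding g_def by (rule mat_piecewise_index_four_block_mat[of "t + t" m "t + t" m "\<lambda>x y. ?M $$ (x, y)"])
  also have "mat (t + t) (t + t) (\<lambda>(i, j). ?M $$ (if i < t then \<tau> i else \<tau> (i - t) + n,
         if j < t then \<tau> j else \<tau> (j - t) + n)) =
      four_block_mat (mat t t (\<lambda>(i, j). ?M $$ (\<tau> i, \<tau> j))) (mat t t (\<lambda>(i, j). ?M $$ (\<tau> i, \<tau> j + n)))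
        (mat t t (\<lambda>(i, j). ?M $$ (\<tau> i + n, \<tau> j))) (mat t t (\<lambda>(i, j). ?M $$ (\<tau> i + n, \<tau> j + n)))"
    by (rule mat_piecewise_index_four_block_mat[of t t t t "\<lambda>x y. ?M $$ (x, y)"])
  also have "\<dots> = four_block_mat X (X + 1\<^sub>m t) (X - 1\<^sub>m t) X"
    unfolding X_def using \<tau>_lt \<tau>_eq by (intro eq_matI) (auto simp: index)
  also have "mat (t + t) m (\<lambda>(i, j). ?M $$ (if i < t then \<tau> i else \<tau> (i - t) + n, \<sigma> (\<psi> j))) =
      four_block_mat Y (0\<^sub>m t 0) Y (0\<^sub>m t 0)"
    unfolding Y_def using \<tau>_lt \<psi>_lt \<tau>_\<psi> by (intro eq_matI) (auto intro!: index_copies \<sigma>)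
  also have "mat m (t + t) (\<lambda>(i, j). ?M $$ (\<sigma> (\<psi> i), if j < t then \<tau> j else \<tau> (j - t) + n)) =
      four_block_mat Z Z (0\<^sub>m 0 t) (0\<^sub>m 0 t)"
    unfolding Z_def using \<tau>_lt \<psi>_lt \<tau>_\<psi>[THEN not_sym] by (intro eq_matI) (auto intro!: index_copies \<sigma>)
  also have "mat m m (\<lambda>(i, j). ?M $$ (\<sigma> (\<psi> i), \<sigma> (\<psi> j))) = W"
    unfolding W_def using \<psi>_lt by (intro eq_matI) (auto intro!: index_copies \<sigma>)
  finally show ?thesis
    using det_doubled_block_mat[of X t Y m Z W] unfolding X_def Y_def Z_def W_def by simp
qed

lemma bij_betw_doubled_enumeration:
  assumes S: "S \<subseteq> {0..<n + n}"
  defines "T \<equiv> {a. a < n \<and> a \<in> S \<and> a + n \<in> S}" and "Q \<equiv> {a. a < n \<and> (a \<in> S) \<noteq> (a + n \<in> S)}"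
    and "\<sigma> \<equiv> \<lambda>a. if a \<in> S then a else a + n"
  shows "bij_betw (\<lambda>i. if i < card T + card T then (if i < card T then pick T i else pick T (i - card T) + n)
      else \<sigma> (pick Q (i - (card T + card T)))) {0..<card T + card T + card Q} S"
proof -
  have T: "bij_betw (pick T) {0..<card T} T" and Q: "bij_betw (pick Q) {0..<card Q} Q"
    unfolding T_def Q_def by (auto intro: bij_betw_pick)
  have "bij_betw (\<lambda>i. pick T i + n) {0..<card T} ((\<lambda>a. a + n) ` T)"
    using bij_betw_trans[OF T inj_on_imp_bij_betw[of "\<lambda>a. a + n"]] by (simp add: comp_def)
  moreover have "bij_betw (\<lambda>i. \<sigma> (pick Q i)) {0..<card Q} (\<sigma> ` Q)"
  proof -
    have "inj_on \<sigma> Q" unfolding inj_on_def \<sigma>_def Q_def by auto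
    then show ?thesis using bij_betw_trans[OF Q inj_on_imp_bij_betw] by (simp add: comp_def)
  qed
  moreover have "T \<inter> (\<lambda>a. a + n) ` T = {}" "(T \<union> (\<lambda>a. a + n) ` T) \<inter> \<sigma> ` Q = {}"
    unfolding T_def Q_def \<sigma>_def by auto
  ultimately have "bij_betw (\<lambda>i. if i < card T + card T
        then (if i < card T then pick T i else pick T (i - card T) + n)
        else \<sigma> (pick Q (i - (card T + card T)))) {0..<card T + card T + card Q}
      (T \<union> (\<lambda>a. a + n) ` T \<union> \<sigma> ` Q)"
    using T by (intro bij_betw_piecewise_index) auto
  also have "T \<union> (\<lambda>a. a + n) ` T \<union> \<sigma> ` Q = S"
  proof (intro equalityI subsetI)
    fix x assume "x \<in> S"
    then consider "x < n" | a where "a < n" "x = a + n"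
      using S by (metis add.commute atLeastLessThan_iff le_add_diff_inverse not_le subset_eq add_less_cancel_left)
    then show "x \<in> T \<union> (\<lambda>a. a + n) ` T \<union> \<sigma> ` Q"
      using \<open>x \<in> S\<close> unfolding T_def Q_def \<sigma>_def by cases (auto simp: image_iff)
  qed (use S in \<open>auto simp: T_def Q_def \<sigma>_def\<close>)
  finally show ?thesis .
qed

lemma det_submatrix_doubled_mat:
  fixes A :: "'a :: idom mat"
  assumes A: "A \<in> carrier_mat n n" and S: "S \<subseteq> {0..<n + n}"
  defines "Q \<equiv> {a. a < n \<and> (a \<in> S) \<noteq> (a + n \<in> S)}"
  shows "det (submatrix (four_block_mat A (A + 1\<^sub>m n) (A - 1\<^sub>m n) A) S S) = det (submatrix A Q Q)"
proof -
  let ?M = "four_block_mat A (A + 1\<^sub>m n) (A - 1\<^sub>m n) A"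
  define T where "T = {a. a < n \<and> a \<in> S \<and> a + n \<in> S}"
  define \<sigma> where "\<sigma> = (\<lambda>a. if a \<in> S then a else a + n)"
  define t where "t = card T"
  define m where "m = card Q"
  define g where "g = (\<lambda>i. if i < t + t then (if i < t then pick T i else pick T (i - t) + n)
    else \<sigma> (pick Q (i - (t + t))))"
  have g: "bij_betw g {0..<t + t + m} S"
    unfolding g_def t_def m_def T_def Q_def \<sigma>_def by (rule bij_betw_doubled_enumeration[OF S])
  have T: "bij_betw (pick T) {0..<t} T" and Q: "bij_betw (pick Q) {0..<m} Q"
    unfolding t_def m_def T_def Q_def by (auto intro: bij_betw_pick)
  have M: "?M \<in> carrier_mat (n + n) (n + n)" using A by auto
  have "det (submatrix ?M S S) = det (mat (t + t + m) (t + t + m) (\<lambda>(i, j). ?M $$ (g i, g j)))"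
    by (rule det_submatrix_reindex[OF M S g, symmetric])
  also have "\<dots> = det (mat m m (\<lambda>(i, j). A $$ (pick Q i, pick Q j)))"
  proof -
    have \<tau>_inj: "inj_on (pick T) {0..<t}"
      using T by (rule bij_betw_imp_inj_on)
    have "pick T ` {0..<t} = T" "pick Q ` {0..<m} = Q"
      using T Q by (simp_all add: bij_betw_imp_surj_on)
    then have \<tau>_range: "pick T ` {0..<t} \<subseteq> {0..<n}"
      and \<psi>_range: "pick Q ` {0..<m} \<subseteq> {0..<n} - pick T ` {0..<t}"
      by (auto simp: T_def Q_def)
    have \<sigma>_range: "\<And>q. q < n \<Longrightarrow> \<sigma> q \<in> {q, q + n}"
      by (simp add: \<sigma>_def)
    show ?thesis
      unfolding g_def by (rule det_doubled_mat_enumeration[OF A \<tau>_inj \<tau>_range \<psi>_range \<sigma>_range])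
  qed
  also have "\<dots> = det (submatrix A Q Q)"
    by (rule det_submatrix_reindex[OF A _ Q]) (auto simp: Q_def)
  finally show ?thesis .
qed

theorem lemma6p7:
  fixes A :: "real mat" and n :: nat
  assumes "A \<in> carrier_mat n n"
    and "P_matrix A"
  shows "P_matrix (four_block_mat A (A + 1\<^sub>m n) (A - 1\<^sub>m n) A)"
  unfolding P_matrix_def
proof (intro conjI allI impI)
  let ?M = "four_block_mat A (A + 1\<^sub>m n) (A - 1\<^sub>m n) A"
  show "?M \<in> carrier_mat (dim_row ?M) (dim_row ?M)" using assms(1) by auto
  fix S assume S: "S \<subseteq> {0..<dim_row ?M} \<and> S \<noteq> {}"
  define Q where "Q = {a. a < n \<and> (a \<in> S) \<noteq> (a + n \<in> S)}"
  have "det (submatrix ?M S S) = det (submatrix A Q Q)"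
    unfolding Q_def using assms(1) S by (intro det_submatrix_doubled_mat) auto
  moreover have "det (submatrix A Q Q) > 0"
  proof (cases "Q = {}")
    case True
    then have "submatrix A Q Q = 1\<^sub>m 0" by (intro eq_matI) (auto simp: submatrix_def)
    then show ?thesis by simp
  next
    case False
    have "Q \<subseteq> {0..<n}" "dim_row A = n" unfolding Q_def using assms(1) by auto
    then show ?thesis using assms(2) False unfolding P_matrix_def by blast
  qed
  ultimately show "det (submatrix ?M S S) > 0" by (simp only:)
qed

end
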